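(* For every $0\le k\le n$ and every $\pi\in S_n$, $$\chi_{\beta_{H_n^k}}(\pi)=|C_\pi|\,(n-|\mathrm{supp}(\pi)|)_k=(n-|\mathrm{supp}(\pi)|)_k\,\chi_{Conj}(\pi),$$ where $\chi_{Conj}$ is the character of the conjugacy representation of $S_n$.
   Context: Permutations are composed as functions, and $\pi\in S_n$ is identified with the permutation matrix whose $(i,j)$ entry is $1$ iff $i=\pi(j)$. For $A\in GL_n(\mathbb{Z}_2)$ let $\eta(A)$ (resp. $\theta(A)$) be the partition obtained by sorting the row sums (resp. column sums) of $A$, computed as integers, in weakly decreasing order. For $0\le k\le n$, $H_n^k=\{A\in GL_n(\mathbb{Z}_2)\mid \eta(A)=(n,n-1,\dots,n-k+1,1^{n-k}),\ \theta(A)=((k+1)^{n-k},k,k-1,\dots,1)\}$. $\beta_{H_n^k}$ is the complex permutation representation of $S_n$ on the space with basis $H_n^k$ given by $\pi\circ A=\pi A\pi^{-1}$, with character $\chi_{\beta_{H_n^k}}$. $C_\pi$ is the centralizer of $\pi$ in $S_n$, $\mathrm{supp}(\pi)$ is the set of points moved by $\pi$, and $(m)_k=m(m-1)\cdots(m-k+1)$ is the falling factorial ($(m)_0=1$, and $(m)_k=0$ if $0\le m<k$). The conjugacy representation is the permutation representation of $S_n$ acting on itself by conjugation. *)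

theory Defs
  imports "HOL-Library.Z2" "HOL-Combinatorics.Permutations" "Jordan_Normal_Form.Matrix" Complex_Main
begin

definition Sym :: "nat \<Rightarrow> (nat \<Rightarrow> nat) set" where
  "Sym n = {p. p permutes {..<n}}"

definition perm_mat :: "nat \<Rightarrow> (nat \<Rightarrow> nat) \<Rightarrow> bit mat" where
  "perm_mat n p = mat n n (\<lambda>(i, j). if i = p j then 1 else 0)"

definition conj_act :: "nat \<Rightarrow> (nat \<Rightarrow> nat) \<Rightarrow> bit mat \<Rightarrow> bit mat" where
  "conj_act n p A = perm_mat n p * A * perm_mat n (inv_into UNIV p)"

definition GL2 :: "nat \<Rightarrow> bit mat set" where
  "GL2 n = {A \<in> carrier_mat n n. invertible_mat A}"

definition row_sum :: "bit mat \<Rightarrow> nat \<Rightarrow> nat" where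
  "row_sum A i = (\<Sum>j<dim_col A. if A $$ (i, j) = 1 then 1 else 0)"

definition col_sum :: "bit mat \<Rightarrow> nat \<Rightarrow> nat" where
  "col_sum A j = (\<Sum>i<dim_row A. if A $$ (i, j) = 1 then 1 else 0)"

text \<open>Partitions as weakly decreasing lists.\<close>
definition eta :: "bit mat \<Rightarrow> nat list" where
  "eta A = rev (sort (map (row_sum A) [0..<dim_row A]))"

definition theta :: "bit mat \<Rightarrow> nat list" where
  "theta A = rev (sort (map (col_sum A) [0..<dim_col A]))"

definition H :: "nat \<Rightarrow> nat \<Rightarrow> bit mat set" where
  "H n k = {A \<in> GL2 n.
     eta A = map (\<lambda>i. n - i) [0..<k] @ replicate (n - k) 1 \<and>
     theta A = replicate (n - k) (k + 1) @ map (\<lambda>i. k - i) [0..<k]}"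

text \<open>Character of the permutation representation on basis H n k: trace of the
  permutation matrix of pi, i.e. the sum of its diagonal coefficients.\<close>
definition chi_beta :: "nat \<Rightarrow> nat \<Rightarrow> (nat \<Rightarrow> nat) \<Rightarrow> complex" where
  "chi_beta n k p = (\<Sum>A\<in>H n k. if conj_act n p A = A then 1 else 0)"

text \<open>Character of the conjugacy representation (S_n acting on itself by conjugation).\<close>
definition chi_conj :: "nat \<Rightarrow> (nat \<Rightarrow> nat) \<Rightarrow> complex" where
  "chi_conj n p = (\<Sum>s\<in>Sym n. if p \<circ> s \<circ> inv_into UNIV p = s then 1 else 0)"

definition centralizer :: "nat \<Rightarrow> (nat \<Rightarrow> nat) \<Rightarrow> (nat \<Rightarrow> nat) set" where
  "centralizer n p = {s \<in> Sym n. s \<circ> p = p \<circ> s}"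

definition supp :: "(nat \<Rightarrow> nat) \<Rightarrow> nat set" where
  "supp p = {i. p i \<noteq> i}"

text \<open>Falling factorial (m)_k; equals 0 when m < k.\<close>
definition falling :: "nat \<Rightarrow> nat \<Rightarrow> nat" where
  "falling m k = (\<Prod>i<k. m - i)"

end

theory Submission
  imports Defs "Jordan_Normal_Form.Determinant"
begin

text \<open>
  For a permutation s and an arrangement c = (c_0, ..., c_{k-1}) of k distinct points, let Psi(s, c)
  be the 0-1 matrix whose row s^-1(c_t) has its ones exactly outside c and at c_0, ..., c_{k-1-t},
  and whose every other row i is the unit vector at s(i). Its row sums are n - t (once each) and 1,
  its column sums k + 1 (outside c) and k - a (at c_a), and it is invertible, so it lies in H_n^k.
  Conversely these margins force every matrix of H_n^k into this shape: the rows of sum n - t and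
  the columns of sum k - t are unique, the remaining rows are unit vectors which by pigeonhole hit
  the columns of sum k + 1 bijectively, and the k x k block cut out by the big rows and the columns
  c_0, ..., c_{k-1} is a staircase because of its margins. Hence (s, c) maps bijectively onto
  H_n^k, and equivariantly: pi Psi(s, c) pi^-1 = Psi(pi s pi^-1, pi o c). The matrices fixed by pi
  therefore correspond to pairs of a permutation commuting with pi and an arrangement of fixed
  points of pi, which gives |C_pi| (n - |supp pi|)_k; and |C_pi| = chi_Conj(pi).
\<close>

lemma sum_if_eq_card:
  assumes "finite A"
  shows "(\<Sum>x\<in>A. if P x then 1 else 0) = (of_nat (card {x\<in>A. P x}) :: 'b :: semiring_1)"
  using assms by (simp add: sum.If_cases Int_def)

lemma The_iff_if_card_eq_1:
  assumes "card {x. P x} = 1"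
  shows "P y \<longleftrightarrow> y = (THE x. P x)"
proof -
  obtain a where "{x. P x} = {a}"
    using assms card_1_singletonE by blast
  then show ?thesis
    by (metis (mono_tags) mem_Collect_eq singletonD singletonI the_equality)
qed

lemma bij_betw_if_covers_card_le:
  assumes "finite U" and "J \<subseteq> g ` U" and "card U \<le> card J"
  shows "bij_betw g U J"
proof -
  have "card J \<le> card (g ` U)"
    using assms by (intro card_mono) auto
  moreover have "card (g ` U) \<le> card U"
    using assms(1) by (rule card_image_le)
  ultimately have "card (g ` U) = card J" and "card (g ` U) = card U"
    using assms(3) by linarith+
  then have "g ` U = J"
    using assms(1,2) by (metis card_subset_eq finite_imageI)
  then show ?thesis
    using \<open>card (g ` U) = card U\<close> assms(1) by (simp add: bij_betw_def eq_card_imp_inj_on)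
qed

lemma mset_map_upt: "mset (map f [0..<n]) = image_mset f (mset_set {..<n})"
  by (metis atLeast_upt mset_map mset_set_set distinct_upt)

lemma count_mset_map_upt: "count (mset (map f [0..<n])) v = card {i. i < n \<and> f i = v}"
  by (simp add: mset_map_upt count_image_mset_eq_card_vimage vimage_def Collect_conj_eq lessThan_def Int_commute)

lemma card_level_set_if_mset_eq:
  assumes "mset (map f [0..<n]) = mset (map g [0..<k]) + replicate_mset m b"
  shows "card {i. i < n \<and> f i = v} = card {t. t < k \<and> g t = v} + (if v = b then m else 0)"
  using arg_cong[OF assms, of "\<lambda>M. count M v"]
  by (simp only: count_mset_map_upt count_union count_replicate_mset)

lemma image_mset_comp_permutes:
  assumes "s permutes A"
  shows "image_mset (f \<circ> s) (mset_set A) = image_mset f (mset_set A)"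
proof -
  have "image_mset s (mset_set A) = mset_set A"
    using image_mset_mset_set[OF permutes_inj_on[OF assms]] permutes_image[OF assms] by simp
  then show ?thesis
    by (metis image_mset.compositionality)
qed

lemma rev_sort_eq_if_mset_eq:
  fixes xs ys :: "'a :: linorder list"
  assumes "mset xs = mset ys" and "sorted (rev ys)"
  shows "rev (sort xs) = ys"
proof -
  have "sort xs = rev ys"
    by (rule properties_for_sort) (use assms in auto)
  then show ?thesis by simp
qed

lemma sorted_rev_antimono_upt:
  "(\<And>i j. i \<le> j \<Longrightarrow> j < k \<Longrightarrow> f j \<le> (f i :: 'a :: linorder)) \<Longrightarrow> sorted (rev (map f [0..<k]))"
  by (auto simp: sorted_iff_nth_mono rev_nth)

lemma staircase_iff:
  fixes B :: "nat \<Rightarrow> nat \<Rightarrow> bool"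
  assumes "\<And>t. t < k \<Longrightarrow> card {s. s < k \<and> B t s} = k - t"
    and "\<And>s. s < k \<Longrightarrow> card {t. t < k \<and> B t s} = k - s"
    and "t < k" and "s < k"
  shows "B t s \<longleftrightarrow> s + t < k"
  using assms
proof (induction k arbitrary: B t s)
  case 0
  then show ?case by simp
next
  case (Suc k)
  have first_col: "B t 0" if "t < Suc k" for t
  proof -
    have "{t. t < Suc k \<and> B t 0} = {..<Suc k}"
      using Suc.prems(2)[of 0] by (intro card_subset_eq) auto
    then show ?thesis
      using that by auto
  qed
  have last_row: "{s. s < Suc k \<and> B k s} = {0}"
    using Suc.prems(1)[of k] first_col[of k] by (intro card_subset_eq[symmetric]) auto
  have not_last_row: "\<not> B k (Suc s)" if "s < k" for s
    using last_row that by blast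
  \<comment> \<open>Deleting the first column and the last row leaves a staircase of size k.\<close>
  have shifted: "B t (Suc s) \<longleftrightarrow> s + t < k" if "t < k" and "s < k" for t s
  proof (rule Suc.IH[where B = "\<lambda>t s. B t (Suc s)", OF _ _ that])
    fix t assume "t < k"
    have "{s. s < Suc k \<and> B t s} - {0} = Suc ` {s. s < k \<and> B t (Suc s)}"
    proof (intro Set.set_eqI iffI)
      fix x assume "x \<in> {s. s < Suc k \<and> B t s} - {0}"
      then obtain s where "x = Suc s" "s < k" "B t (Suc s)"
        by (cases x) auto
      then show "x \<in> Suc ` {s. s < k \<and> B t (Suc s)}"
        by blast
    qed auto
    moreover have "card ({s. s < Suc k \<and> B t s} - {0}) = k - t"
      using Suc.prems(1)[of t] first_col[of t] \<open>t < k\<close> by simp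
    ultimately show "card {s. s < k \<and> B t (Suc s)} = k - t"
      by (simp add: card_image)
  next
    fix s assume "s < k"
    have "{t. t < k \<and> B t (Suc s)} = {t. t < Suc k \<and> B t (Suc s)}"
      using not_last_row \<open>s < k\<close> less_Suc_eq by blast
    then show "card {t. t < k \<and> B t (Suc s)} = k - s"
      using Suc.prems(2)[of "Suc s"] \<open>s < k\<close> by simp
  qed
  show ?case
  proof (cases s)
    case 0
    then show ?thesis
      using first_col Suc.prems(3) by simp
  next
    case s': (Suc s')
    then show ?thesis
      using shifted[of t s'] not_last_row[of s'] Suc.prems(3,4) by (cases "t = k") auto
  qed
qed

section \<open>Arrangements\<close>

definition arrangements :: "'a set \<Rightarrow> nat \<Rightarrow> 'a list set" where
  "arrangements A k = {xs. length xs = k \<and> distinct xs \<and> set xs \<subseteq> A}"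

lemma finite_arrangements: "finite A \<Longrightarrow> finite (arrangements A k)"
  unfolding arrangements_def by (rule finite_subset[OF _ finite_lists_length_eq, of _ A k]) auto

lemma falling_eq_prod_atLeastAtMost: "k \<le> m \<Longrightarrow> falling m k = \<Prod>{m - k + 1..m}"
  unfolding falling_def by (rule prod.reindex_bij_witness[of _ "\<lambda>j. m - j" "\<lambda>i. m - i"]) auto

lemma card_arrangements:
  assumes "finite A"
  shows "card (arrangements A k) = falling (card A) k"
proof (cases "k \<le> card A")
  case True
  then show ?thesis
    using card_lists_distinct_length_eq[OF assms True]
    by (simp add: arrangements_def falling_eq_prod_atLeastAtMost)
next
  case False
  then have "arrangements A k = {}"
    using assms by (auto simp: arrangements_def) (metis card_mono distinct_card)
  moreover have "falling (card A) k = 0"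
    using False by (auto simp: falling_def intro!: bexI[of _ "card A"])
  ultimately show ?thesis by simp
qed

lemma map_in_arrangements:
  assumes "p permutes A" and "c \<in> arrangements A k"
  shows "map p c \<in> arrangements A k"
  using assms permutes_in_image[OF assms(1)]
  by (auto simp: arrangements_def distinct_map intro: inj_on_subset[OF permutes_inj_on[OF assms(1)]])

lemma perm_mat_carrier [simp]: "perm_mat n p \<in> carrier_mat n n"
  by (simp add: perm_mat_def)

lemma index_perm_mat_mult:
  assumes p: "p permutes {..<n}" and "A \<in> carrier_mat n m" and "i < n" and "j < m"
  shows "(perm_mat n p * A) $$ (i, j) = A $$ (inv_into UNIV p i, j)"
proof -
  have "(perm_mat n p * A) $$ (i, j) = (\<Sum>a\<in>{0..<n}. (if i = p a then 1 else 0) * A $$ (a, j))"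
    using assms by (simp add: perm_mat_def scalar_prod_def)
  also have "\<dots> = (\<Sum>a\<in>{0..<n}. if a = inv_into UNIV p i then A $$ (a, j) else 0)"
  proof (rule sum.cong[OF refl])
    fix a
    have "i = p a \<longleftrightarrow> a = inv_into UNIV p i"
      by (metis permutes_inv_eq[OF p])
    then show "(if i = p a then 1 else 0) * A $$ (a, j) = (if a = inv_into UNIV p i then A $$ (a, j) else 0)"
      by simp
  qed
  also have "\<dots> = A $$ (inv_into UNIV p i, j)"
    using permutes_in_image[OF permutes_inv[OF p]] \<open>i < n\<close> by (subst sum.delta) simp_all
  finally show ?thesis .
qed

lemma index_mult_perm_mat:
  assumes q: "q permutes {..<n}" and "A \<in> carrier_mat m n" and "i < m" and "j < n"
  shows "(A * perm_mat n q) $$ (i, j) = A $$ (i, q j)"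
proof -
  have "(A * perm_mat n q) $$ (i, j) = (\<Sum>b\<in>{0..<n}. A $$ (i, b) * (if b = q j then 1 else 0))"
    using assms by (simp add: perm_mat_def scalar_prod_def)
  also have "\<dots> = (\<Sum>b\<in>{0..<n}. if b = q j then A $$ (i, b) else 0)"
    by (rule sum.cong) auto
  also have "\<dots> = A $$ (i, q j)"
    using permutes_in_image[OF q] \<open>j < n\<close> by (subst sum.delta) simp_all
  finally show ?thesis .
qed

lemma index_conj_act:
  assumes p: "p permutes {..<n}" and A: "A \<in> carrier_mat n n" and "i < n" and "j < n"
  shows "conj_act n p A $$ (i, j) = A $$ (inv_into UNIV p i, inv_into UNIV p j)"
proof -
  have inv_p: "inv_into UNIV p permutes {..<n}"
    using permutes_inv[OF p] .
  have "conj_act n p A $$ (i, j) = (perm_mat n p * A) $$ (i, inv_into UNIV p j)"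
    unfolding conj_act_def using mult_carrier_mat[OF perm_mat_carrier A] assms(3,4)
    by (rule index_mult_perm_mat[OF inv_p])
  also have "\<dots> = A $$ (inv_into UNIV p i, inv_into UNIV p j)"
    using permutes_in_image[OF inv_p] assms(4) by (intro index_perm_mat_mult[OF p A \<open>i < n\<close>]) simp
  finally show ?thesis .
qed

lemma invertible_mat_if_det_neq_0:
  fixes A :: "'a :: field mat"
  assumes A: "A \<in> carrier_mat n n" and "det A \<noteq> 0"
  shows "invertible_mat A"
proof -
  obtain B where "B \<in> carrier_mat n n" "B * A = 1\<^sub>m n" "A * B = 1\<^sub>m n"
    using det_non_zero_imp_unit[OF assms, of "()"] unfolding Units_def ring_mat_def by auto
  then show ?thesis
    using A unfolding invertible_mat_def inverts_mat_def by auto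
qed

section \<open>Staircase matrices\<close>

text \<open>
  Row x of the staircase pattern of c: for x = c_t its ones lie outside c and at c_0, ..., c_{k-1-t};
  for x outside c it is the unit vector at x. Row i of stair_mat n s c is row s i of the pattern,
  so stair_mat n s c is the matrix Psi(s, c) of the introduction.
\<close>

definition stair_rel :: "nat list \<Rightarrow> nat \<Rightarrow> nat \<Rightarrow> bool" where
  "stair_rel c x j \<longleftrightarrow>
     (if x \<in> set c then j \<notin> set c \<or> (\<exists>a b. a + b < length c \<and> c ! a = j \<and> c ! b = x)
      else j = x)"

definition stair_mat :: "nat \<Rightarrow> (nat \<Rightarrow> nat) \<Rightarrow> nat list \<Rightarrow> bit mat" where
  "stair_mat n s c = mat n n (\<lambda>(i, j). if stair_rel c (s i) j then 1 else 0)"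

lemma stair_mat_carrier [simp]: "stair_mat n s c \<in> carrier_mat n n"
  by (simp add: stair_mat_def)

lemma dim_stair_mat [simp]: "dim_row (stair_mat n s c) = n" "dim_col (stair_mat n s c) = n"
  by (simp_all add: stair_mat_def)

lemma index_stair_mat:
  "i < n \<Longrightarrow> j < n \<Longrightarrow> stair_mat n s c $$ (i, j) = (if stair_rel c (s i) j then 1 else 0)"
  by (simp add: stair_mat_def)

lemma stair_rel_map:
  assumes "inj p"
  shows "stair_rel (map p c) (p x) (p j) = stair_rel c x j"
proof -
  have "map p c ! a = p j \<and> map p c ! b = p x \<longleftrightarrow> c ! a = j \<and> c ! b = x"
    if "a + b < length c" for a b
  proof -
    have "a < length c" "b < length c"
      using that by linarith+
    then show ?thesis
      using assms by (simp add: inj_eq)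
  qed
  then have "(\<exists>a b. a + b < length c \<and> map p c ! a = p j \<and> map p c ! b = p x) \<longleftrightarrow>
        (\<exists>a b. a + b < length c \<and> c ! a = j \<and> c ! b = x)"
    by blast
  then show ?thesis
    using assms by (simp add: stair_rel_def inj_image_mem_iff inj_eq)
qed

lemma conj_act_stair_mat:
  assumes p: "p permutes {..<n}"
  shows "conj_act n p (stair_mat n s c) = stair_mat n (p \<circ> s \<circ> inv_into UNIV p) (map p c)"
proof (rule eq_matI)
  fix i j
  assume "i < dim_row (stair_mat n (p \<circ> s \<circ> inv_into UNIV p) (map p c))"
    and "j < dim_col (stair_mat n (p \<circ> s \<circ> inv_into UNIV p) (map p c))"
  then have ij: "i < n" "j < n" by simp_all
  have "stair_rel (map p c) (p (s (inv_into UNIV p i))) j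
      = stair_rel c (s (inv_into UNIV p i)) (inv_into UNIV p j)"
    using stair_rel_map[OF permutes_inj[OF p]] permutes_inverses(1)[OF p] by metis
  then show "conj_act n p (stair_mat n s c) $$ (i, j)
      = stair_mat n (p \<circ> s \<circ> inv_into UNIV p) (map p c) $$ (i, j)"
    using ij permutes_in_image[OF permutes_inv[OF p]]
    by (simp add: index_conj_act[OF p stair_mat_carrier] index_stair_mat)
qed (simp_all add: conj_act_def perm_mat_def)

locale arrangement =
  fixes n k :: nat and c :: "nat list"
  assumes arrangement: "c \<in> arrangements {..<n} k"
begin

lemma length_c [simp]: "length c = k"
  and distinct_c: "distinct c"
  and set_c: "set c \<subseteq> {..<n}"
  using arrangement by (auto simp: arrangements_def)

lemma k_le_n: "k \<le> n"
  using card_mono[OF finite_lessThan set_c] distinct_card[OF distinct_c] by simp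

lemma nth_c_less: "t < k \<Longrightarrow> c ! t < n"
  by (metis length_c lessThan_iff nth_mem set_c subsetD)

lemma nth_c_eq_iff: "a < k \<Longrightarrow> b < k \<Longrightarrow> c ! a = c ! b \<longleftrightarrow> a = b"
  using distinct_c by (simp add: nth_eq_iff_index_eq)

lemma card_outside: "card ({..<n} - set c) = n - k"
  using set_c distinct_card[OF distinct_c] by (simp add: card_Diff_subset)

lemma card_image_nth: "m \<le> k \<Longrightarrow> card ((!) c ` {..<m}) = m"
  by (subst card_image) (auto intro!: inj_onI simp: nth_c_eq_iff)

lemma stair_rel_nth:
  assumes "t < k"
  shows "stair_rel c (c ! t) j \<longleftrightarrow> j \<notin> set c \<or> (\<exists>a. a + t < k \<and> c ! a = j)"
proof -
  have "c ! b = c ! t \<longleftrightarrow> b = t" if "a + b < k" for a b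
    using that assms nth_c_eq_iff by (metis add_lessD1 add.commute)
  then show ?thesis
    using assms by (auto simp: stair_rel_def)
qed

lemma stair_rel_outside: "x \<notin> set c \<Longrightarrow> stair_rel c x j \<longleftrightarrow> j = x"
  by (simp add: stair_rel_def)

lemma stair_row_nth:
  "t < k \<Longrightarrow> {j. j < n \<and> stair_rel c (c ! t) j} = ({..<n} - set c) \<union> (!) c ` {..<k - t}"
  using stair_rel_nth nth_c_less by (auto simp: less_diff_conv)

lemma card_stair_row_nth:
  assumes "t < k"
  shows "card {j. j < n \<and> stair_rel c (c ! t) j} = n - t"
proof -
  have "({..<n} - set c) \<inter> (!) c ` {..<k - t} = {}"
    by auto
  then have "card (({..<n} - set c) \<union> (!) c ` {..<k - t}) = (n - k) + (k - t)"
    using card_outside card_image_nth[of "k - t"] by (simp add: card_Un_disjoint)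
  then show ?thesis
    using assms k_le_n by (simp add: stair_row_nth)
qed

lemma stair_col_outside:
  "j < n \<Longrightarrow> j \<notin> set c \<Longrightarrow> {x. x < n \<and> stair_rel c x j} = insert j (set c)"
  using set_c by (auto simp: stair_rel_def)

lemma card_stair_col_outside:
  "j < n \<Longrightarrow> j \<notin> set c \<Longrightarrow> card {x. x < n \<and> stair_rel c x j} = k + 1"
  using distinct_card[OF distinct_c] by (simp add: stair_col_outside)

lemma stair_col_nth:
  assumes "a < k"
  shows "{x. x < n \<and> stair_rel c x (c ! a)} = (!) c ` {..<k - a}"
proof (intro Set.set_eqI iffI)
  fix x assume x: "x \<in> {x. x < n \<and> stair_rel c x (c ! a)}"
  then have "x \<in> set c"
    using assms stair_rel_outside by fastforce
  then obtain t where "t < k" "x = c ! t"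
    by (metis in_set_conv_nth length_c)
  then show "x \<in> (!) c ` {..<k - a}"
    using x assms stair_rel_nth nth_c_eq_iff by (fastforce dest: add_lessD1)
next
  fix x assume "x \<in> (!) c ` {..<k - a}"
  then obtain t where t: "t < k - a" "x = c ! t"
    by blast
  then have "a + t < k" and "t < k"
    by linarith+
  then show "x \<in> {x. x < n \<and> stair_rel c x (c ! a)}"
    using t(2) stair_rel_nth[of t "c ! a"] nth_c_less by auto
qed

lemma card_stair_col_nth: "a < k \<Longrightarrow> card {x. x < n \<and> stair_rel c x (c ! a)} = k - a"
  by (simp add: stair_col_nth card_image_nth)

lemma stair_rel_separates:
  assumes "x \<in> set c" and "y \<notin> set c"
  shows "\<exists>j<n. stair_rel c x j \<and> \<not> stair_rel c y j"
proof -
  from assms(1) obtain t where t: "t < k" "x = c ! t"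
    by (auto simp: in_set_conv_nth)
  have "c ! 0 \<in> set c" and "c ! 0 < n"
    using t(1) nth_mem[of 0 c] nth_c_less[of 0] by simp_all
  moreover have "stair_rel c x (c ! 0)"
    unfolding t(2) stair_rel_nth[OF t(1)] using t(1) by (intro disjI2 exI[of _ 0]) simp
  moreover have "\<not> stair_rel c y (c ! 0)"
    using stair_rel_outside[OF assms(2)] assms(2) \<open>c ! 0 \<in> set c\<close> by auto
  ultimately show ?thesis
    by blast
qed

lemma stair_rel_row_inj:
  assumes "x < n" and "y < n" and rows: "\<And>j. j < n \<Longrightarrow> stair_rel c x j \<longleftrightarrow> stair_rel c y j"
  shows "x = y"
proof -
  consider (in_c) "x \<in> set c" "y \<in> set c" | (outside) "x \<notin> set c" "y \<notin> set c"
    | (mixed) "x \<in> set c" "y \<notin> set c" | (mixed') "x \<notin> set c" "y \<in> set c"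
    by blast
  then show ?thesis
  proof cases
    case in_c
    then obtain t u where tu: "t < k" "x = c ! t" "u < k" "y = c ! u"
      by (metis in_set_conv_nth length_c)
    have "n - t = card {j. j < n \<and> stair_rel c x j}"
      using tu card_stair_row_nth by simp
    also have "\<dots> = card {j. j < n \<and> stair_rel c y j}"
      using rows by (intro arg_cong[where f = card]) blast
    also have "\<dots> = n - u"
      using tu card_stair_row_nth by simp
    finally have "t = u"
      using tu k_le_n by linarith
    then show ?thesis
      using tu by simp
  next
    case outside
    then show ?thesis
      using rows[OF \<open>x < n\<close>] stair_rel_outside by simp
  next
    case mixed
    then show ?thesis
      using stair_rel_separates[of x y] rows by blast
  next
    case mixed'
    then show ?thesis
      using stair_rel_separates[of y x] rows by blast
  qed
qed

lemma stair_rows_independent: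
  fixes v :: "nat \<Rightarrow> 'a :: ab_group_add"
  assumes rows: "\<And>x. x < n \<Longrightarrow> (\<Sum>j | j < n \<and> stair_rel c x j. v j) = 0" and "j < n"
  shows "v j = 0"
proof -
  have outside: "v x = 0" if "x < n" and "x \<notin> set c" for x
  proof -
    have "{j. j < n \<and> stair_rel c x j} = {x}"
      using that stair_rel_outside by auto
    then show ?thesis
      using rows[OF that(1)] by simp
  qed
  \<comment> \<open>Row c_(k-m) sums v over the complement of c, where v vanishes, and over c_0, ..., c_(m-1).\<close>
  have prefix: "(\<Sum>a<m. v (c ! a)) = 0" if "m \<le> k" for m
  proof (cases "m = 0")
    case False
    then have t: "k - m < k" and "k - (k - m) = m"
      using that by simp_all
    have "(\<Sum>j | j < n \<and> stair_rel c (c ! (k - m)) j. v j)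
        = (\<Sum>j\<in>{..<n} - set c. v j) + (\<Sum>j\<in>(!) c ` {..<m}. v j)"
      unfolding stair_row_nth[OF t] \<open>k - (k - m) = m\<close>
      by (rule sum.union_disjoint) (use that in auto)
    also have "(\<Sum>j\<in>{..<n} - set c. v j) = 0"
      using outside by (intro sum.neutral) auto
    also have "(\<Sum>j\<in>(!) c ` {..<m}. v j) = (\<Sum>a<m. v (c ! a))"
      using that by (intro sum.reindex_cong[where l = "(!) c"]) (auto intro!: inj_onI simp: nth_c_eq_iff)
    finally show ?thesis
      using rows[OF nth_c_less[OF t]] by simp
  qed simp
  have "v (c ! a) = 0" if "a < k" for a
    using prefix[of a] prefix[of "Suc a"] that by simp
  then show ?thesis
    using outside \<open>j < n\<close> by (metis in_set_conv_nth length_c)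
qed

lemma image_mset_split:
  assumes "\<And>t. t < k \<Longrightarrow> f (c ! t) = g t" and "\<And>j. j < n \<Longrightarrow> j \<notin> set c \<Longrightarrow> f j = b"
  shows "image_mset f (mset_set {..<n}) = mset (map g [0..<k]) + replicate_mset (n - k) b"
proof -
  have "mset_set {..<n} = mset c + mset_set ({..<n} - set c)"
    using set_c mset_set_Union[of "set c" "{..<n} - set c"]
    by (simp add: mset_set_set[OF distinct_c] Un_absorb1)
  moreover have "map f c = map g [0..<k]"
    using assms(1) by (intro nth_equalityI) auto
  moreover have "image_mset f (mset_set ({..<n} - set c)) = replicate_mset (n - k) b"
  proof -
    have "image_mset f (mset_set ({..<n} - set c)) = image_mset (\<lambda>_. b) (mset_set ({..<n} - set c))"
      using assms(2) by (intro image_mset_cong) auto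
    then show ?thesis
      using card_outside by (simp add: image_mset_const_eq)
  qed
  ultimately show ?thesis
    by (metis image_mset_union mset_map)
qed

lemma row_sum_stair_mat:
  assumes "i < n"
  shows "row_sum (stair_mat n s c) i = card {j. j < n \<and> stair_rel c (s i) j}"
proof -
  have "row_sum (stair_mat n s c) i = (\<Sum>j<n. if stair_rel c (s i) j then 1 else 0)"
    unfolding row_sum_def using assms by (intro sum.cong) (simp_all add: index_stair_mat)
  then show ?thesis
    by (simp add: sum_if_eq_card)
qed

lemma col_sum_stair_mat:
  assumes s: "s permutes {..<n}" and "j < n"
  shows "col_sum (stair_mat n s c) j = card {x. x < n \<and> stair_rel c x j}"
proof -
  have "col_sum (stair_mat n s c) j = (\<Sum>i<n. if stair_rel c (s i) j then 1 else 0)"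
    unfolding col_sum_def using \<open>j < n\<close> by (intro sum.cong) (simp_all add: index_stair_mat)
  also have "\<dots> = card (s -` {x. x < n \<and> stair_rel c x j})"
    using permutes_in_image[OF s] by (simp add: sum_if_eq_card vimage_def)
  also have "\<dots> = card {x. x < n \<and> stair_rel c x j}"
    using permutes_bij[OF s] by (intro card_vimage_inj) (auto dest: bij_is_inj bij_is_surj)
  finally show ?thesis .
qed

lemma eta_stair_mat:
  assumes s: "s permutes {..<n}"
  shows "eta (stair_mat n s c) = map (\<lambda>t. n - t) [0..<k] @ replicate (n - k) 1"
proof -
  let ?r = "\<lambda>x. card {j. j < n \<and> stair_rel c x j}"
  have "mset (map (row_sum (stair_mat n s c)) [0..<n]) = image_mset (?r \<circ> s) (mset_set {..<n})"
    unfolding mset_map_upt by (intro image_mset_cong) (simp add: row_sum_stair_mat)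
  also have "\<dots> = image_mset ?r (mset_set {..<n})"
    by (rule image_mset_comp_permutes[OF s])
  also have "\<dots> = mset (map (\<lambda>t. n - t) [0..<k]) + replicate_mset (n - k) 1"
    by (rule image_mset_split) (simp_all add: card_stair_row_nth stair_rel_outside Collect_conv_if)
  finally show ?thesis
    unfolding eta_def dim_stair_mat mset_append mset_replicate using k_le_n
    by (intro rev_sort_eq_if_mset_eq) (auto simp: sorted_append intro: sorted_rev_antimono_upt)
qed

lemma theta_stair_mat:
  assumes s: "s permutes {..<n}"
  shows "theta (stair_mat n s c) = replicate (n - k) (k + 1) @ map (\<lambda>t. k - t) [0..<k]"
proof -
  have "mset (map (col_sum (stair_mat n s c)) [0..<n])
      = image_mset (\<lambda>j. card {x. x < n \<and> stair_rel c x j}) (mset_set {..<n})"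
    unfolding mset_map_upt by (intro image_mset_cong) (simp add: col_sum_stair_mat[OF s])
  also have "\<dots> = mset (replicate (n - k) (k + 1) @ map (\<lambda>t. k - t) [0..<k])"
    by (simp add: image_mset_split card_stair_col_nth card_stair_col_outside add.commute)
  finally show ?thesis
    unfolding theta_def dim_stair_mat
    by (intro rev_sort_eq_if_mset_eq) (auto simp: sorted_append intro: sorted_rev_antimono_upt)
qed

lemma det_stair_mat_neq_0:
  assumes s: "s permutes {..<n}"
  shows "det (stair_mat n s c) \<noteq> 0"
proof
  assume "det (stair_mat n s c) = 0"
  then obtain v where v: "v \<in> carrier_vec n" "v \<noteq> 0\<^sub>v n" "stair_mat n s c *\<^sub>v v = 0\<^sub>v n"
    using det_0_iff_vec_prod_zero_field[OF stair_mat_carrier] by blast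
  have "(\<Sum>j | j < n \<and> stair_rel c x j. v $ j) = 0" if "x < n" for x
  proof -
    define i where "i = inv_into UNIV s x"
    have "i < n" and "s i = x"
      using that permutes_in_image[OF permutes_inv[OF s]] permutes_inverses(1)[OF s]
      by (simp_all add: i_def)
    have "(stair_mat n s c *\<^sub>v v) $ i = (\<Sum>j\<in>{0..<n}. (if stair_rel c x j then 1 else 0) * v $ j)"
      using v(1) \<open>i < n\<close> \<open>s i = x\<close> by (simp add: scalar_prod_def index_stair_mat)
    also have "\<dots> = (\<Sum>j\<in>{0..<n}. if stair_rel c x j then v $ j else 0)"
      by (rule sum.cong) simp_all
    also have "\<dots> = (\<Sum>j | j < n \<and> stair_rel c x j. v $ j)"
      by (simp add: sum.inter_filter[symmetric] atLeast0LessThan lessThan_def conj_commute)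
    finally show ?thesis
      using v(3) \<open>i < n\<close> by simp
  qed
  then have "v $ j = 0" if "j < n" for j
    using stair_rows_independent[of "\<lambda>j. v $ j"] that by blast
  then have "v = 0\<^sub>v n"
    using v(1) by (intro eq_vecI) auto
  with v(2) show False ..
qed

lemma stair_mat_in_H:
  assumes "s permutes {..<n}"
  shows "stair_mat n s c \<in> H n k"
  using invertible_mat_if_det_neq_0[OF stair_mat_carrier det_stair_mat_neq_0[OF assms]]
  by (simp add: H_def GL2_def eta_stair_mat[OF assms] theta_stair_mat[OF assms])


lemma eq_if_stair_col_cards_eq:
  assumes c': "c' \<in> arrangements {..<n} k"
    and cols: "\<And>j. j < n \<Longrightarrow> card {x. x < n \<and> stair_rel c x j} = card {x. x < n \<and> stair_rel c' x j}"
  shows "c = c'"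
proof -
  interpret c': arrangement n k c'
    by (rule arrangement.intro[OF c'])
  show ?thesis
  proof (rule nth_equalityI)
    fix a assume "a < length c"
    then have a: "a < k"
      by simp
    have "c ! a \<in> set c'"
    proof (rule ccontr)
      assume "c ! a \<notin> set c'"
      then have "k - a = k + 1"
        using cols[OF nth_c_less[OF a]] card_stair_col_nth[OF a]
          c'.card_stair_col_outside[OF nth_c_less[OF a]] by simp
      then show False
        by simp
    qed
    then obtain b where b: "b < k" "c ! a = c' ! b"
      by (auto simp: in_set_conv_nth)
    then have "k - a = k - b"
      using cols[OF nth_c_less[OF a]] card_stair_col_nth[OF a] c'.card_stair_col_nth[OF b(1)] by simp
    then have "a = b"
      using a b(1) by linarith
    then show "c ! a = c' ! a"
      using b(2) by simp
  qed simp
qed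
end

lemma stair_mat_inj:
  assumes c: "c \<in> arrangements {..<n} k" and c': "c' \<in> arrangements {..<n} k"
    and s: "s permutes {..<n}" and s': "s' permutes {..<n}"
    and eq: "stair_mat n s c = stair_mat n s' c'"
  shows "s = s' \<and> c = c'"
proof -
  interpret c: arrangement n k c
    by (rule arrangement.intro[OF c])
  interpret c': arrangement n k c'
    by (rule arrangement.intro[OF c'])
  have "c = c'"
  proof (rule c.eq_if_stair_col_cards_eq[OF c'])
    fix j assume "j < n"
    then show "card {x. x < n \<and> stair_rel c x j} = card {x. x < n \<and> stair_rel c' x j}"
      using eq c.col_sum_stair_mat[OF s \<open>j < n\<close>] c'.col_sum_stair_mat[OF s' \<open>j < n\<close>] by simp
  qed
  moreover have "s i = s' i" for i
  proof (cases "i < n")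
    case True
    have "stair_rel c (s i) j \<longleftrightarrow> stair_rel c (s' i) j" if "j < n" for j
      using arg_cong[OF eq, of "\<lambda>M. M $$ (i, j)"] \<open>c = c'\<close> True that
      by (auto simp: index_stair_mat split: if_splits)
    then show ?thesis
      using c.stair_rel_row_inj True permutes_in_image[OF s] permutes_in_image[OF s'] by simp
  next
    case False
    then show ?thesis
      using permutes_not_in[OF s] permutes_not_in[OF s'] by simp
  qed
  ultimately show ?thesis
    by auto
qed

section \<open>Every matrix of H is a staircase matrix\<close>

locale H_matrix =
  fixes n k :: nat and A :: "bit mat"
  assumes A_in_H: "A \<in> H n k" and k_le_n: "k \<le> n"
begin

lemma A_carrier: "A \<in> carrier_mat n n"
  using A_in_H by (simp add: H_def GL2_def)

lemma row_sum_eq_card: "row_sum A i = card {j. j < n \<and> A $$ (i, j) = 1}"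
  using A_carrier by (simp add: row_sum_def sum_if_eq_card)

lemma col_sum_eq_card: "col_sum A j = card {i. i < n \<and> A $$ (i, j) = 1}"
  using A_carrier by (simp add: col_sum_def sum_if_eq_card)

lemma card_rows_with_sum:
  "card {i. i < n \<and> row_sum A i = v} = card {t. t < k \<and> n - t = v} + (if v = 1 then n - k else 0)"
proof -
  have "mset (map (row_sum A) [0..<n]) = mset (eta A)"
    using A_carrier by (simp add: eta_def)
  then show ?thesis
    using A_in_H by (intro card_level_set_if_mset_eq) (simp add: H_def)
qed

lemma card_cols_with_sum:
  "card {j. j < n \<and> col_sum A j = v} = card {t. t < k \<and> k - t = v} + (if v = k + 1 then n - k else 0)"
proof -
  have "mset (map (col_sum A) [0..<n]) = mset (theta A)"
    using A_carrier by (simp add: theta_def)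
  then show ?thesis
    using A_in_H by (intro card_level_set_if_mset_eq) (simp add: H_def add.commute)
qed

definition big_row :: "nat \<Rightarrow> nat" where
  "big_row t = (THE i. i < n \<and> row_sum A i = n - t)"

definition big_col :: "nat \<Rightarrow> nat" where
  "big_col t = (THE j. j < n \<and> col_sum A j = k - t)"

definition cols :: "nat list" where
  "cols = map big_col [0..<k]"

definition unit_rows :: "nat set" where
  "unit_rows = {..<n} - big_row ` {..<k}"

definition outer_cols :: "nat set" where
  "outer_cols = {..<n} - set cols"

lemma big_row_iff:
  assumes "t < k"
  shows "i < n \<and> row_sum A i = n - t \<longleftrightarrow> i = big_row t"
proof -
  have "{t'. t' < k \<and> n - t' = n - t} = {t}"
    using assms k_le_n by auto
  then have "card {i. i < n \<and> row_sum A i = n - t} = 1"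
    using card_rows_with_sum[of "n - t"] assms k_le_n by auto
  then show ?thesis
    unfolding big_row_def by (rule The_iff_if_card_eq_1)
qed

lemma big_col_iff:
  assumes "t < k"
  shows "j < n \<and> col_sum A j = k - t \<longleftrightarrow> j = big_col t"
proof -
  have "{t'. t' < k \<and> k - t' = k - t} = {t}"
    using assms by auto
  then have "card {j. j < n \<and> col_sum A j = k - t} = 1"
    using card_cols_with_sum[of "k - t"] by auto
  then show ?thesis
    unfolding big_col_def by (rule The_iff_if_card_eq_1)
qed

lemma big_row_spec: "t < k \<Longrightarrow> big_row t < n \<and> row_sum A (big_row t) = n - t"
  using big_row_iff by blast

lemma big_col_spec: "t < k \<Longrightarrow> big_col t < n \<and> col_sum A (big_col t) = k - t"
  using big_col_iff by blast

lemma inj_on_big_row: "inj_on big_row {..<k}"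
  using big_row_spec k_le_n
  by (intro inj_onI) (metis diff_diff_cancel lessThan_iff less_imp_le_nat order.strict_trans2)

lemma inj_on_big_col: "inj_on big_col {..<k}"
  using big_col_spec by (intro inj_onI) (metis diff_diff_cancel lessThan_iff less_imp_le_nat)

lemma nth_cols: "t < k \<Longrightarrow> cols ! t = big_col t"
  by (simp add: cols_def)

lemma set_cols: "set cols = big_col ` {..<k}"
  by (auto simp: cols_def)

lemma cols_arrangement: "cols \<in> arrangements {..<n} k"
  using inj_on_big_col big_col_spec by (auto simp: arrangements_def cols_def distinct_map atLeast0LessThan)

lemma row_sum_unit_row:
  assumes "i \<in> unit_rows"
  shows "row_sum A i = 1"
proof (rule ccontr)
  assume "row_sum A i \<noteq> 1"
  have "i < n"
    using assms by (simp add: unit_rows_def)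
  then have "card {i'. i' < n \<and> row_sum A i' = row_sum A i} \<noteq> 0"
    by (auto simp: card_eq_0_iff)
  then obtain t where "t < k" "n - t = row_sum A i"
    using card_rows_with_sum[of "row_sum A i"] \<open>row_sum A i \<noteq> 1\<close> by (auto simp: card_eq_0_iff)
  then have "i = big_row t"
    using big_row_iff[OF \<open>t < k\<close>, of i] \<open>i < n\<close> by simp
  then show False
    using assms \<open>t < k\<close> by (simp add: unit_rows_def)
qed

lemma col_sum_outer_col:
  assumes "j \<in> outer_cols"
  shows "col_sum A j = k + 1"
proof (rule ccontr)
  assume "col_sum A j \<noteq> k + 1"
  have "j < n"
    using assms by (simp add: outer_cols_def)
  then have "card {j'. j' < n \<and> col_sum A j' = col_sum A j} \<noteq> 0"
    by (auto simp: card_eq_0_iff)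
  then obtain t where "t < k" "k - t = col_sum A j"
    using card_cols_with_sum[of "col_sum A j"] \<open>col_sum A j \<noteq> k + 1\<close> by (auto simp: card_eq_0_iff)
  then have "j = big_col t"
    using big_col_iff[OF \<open>t < k\<close>, of j] \<open>j < n\<close> by simp
  then show False
    using assms \<open>t < k\<close> by (simp add: outer_cols_def set_cols)
qed

lemma card_unit_rows: "card unit_rows = n - k"
  unfolding unit_rows_def using big_row_spec inj_on_big_row
  by (subst card_Diff_subset) (auto simp: card_image)

lemma card_outer_cols: "card outer_cols = n - k"
  unfolding outer_cols_def using arrangement.card_outside[OF arrangement.intro[OF cols_arrangement]] .

definition unit_col :: "nat \<Rightarrow> nat" where
  "unit_col i = (THE j. j < n \<and> A $$ (i, j) = 1)"

lemma unit_col_iff: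
  assumes "i \<in> unit_rows"
  shows "j < n \<and> A $$ (i, j) = 1 \<longleftrightarrow> j = unit_col i"
  unfolding unit_col_def
  using row_sum_unit_row[OF assms] row_sum_eq_card by (intro The_iff_if_card_eq_1) simp

lemma col_sum_split:
  assumes "j < n"
  shows "col_sum A j
       = card {t. t < k \<and> A $$ (big_row t, j) = 1} + card {i \<in> unit_rows. unit_col i = j}"
proof -
  let ?T = "{t. t < k \<and> A $$ (big_row t, j) = 1}" and ?U = "{i \<in> unit_rows. unit_col i = j}"
  have "{i. i < n \<and> A $$ (i, j) = 1} = big_row ` ?T \<union> ?U"
  proof (intro Set.set_eqI iffI)
    fix i assume i: "i \<in> {i. i < n \<and> A $$ (i, j) = 1}"
    show "i \<in> big_row ` ?T \<union> ?U"
    proof (cases "i \<in> unit_rows")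
      case True
      then have "unit_col i = j"
        using unit_col_iff[OF True, of j] i assms by simp
      then show ?thesis
        using True by simp
    next
      case False
      then obtain t where "t < k" "i = big_row t"
        using i by (auto simp: unit_rows_def)
      then show ?thesis
        using i by blast
    qed
  next
    fix i assume "i \<in> big_row ` ?T \<union> ?U"
    then consider t where "t < k" "i = big_row t" "A $$ (big_row t, j) = 1"
      | "i \<in> unit_rows" "unit_col i = j"
      by blast
    then show "i \<in> {i. i < n \<and> A $$ (i, j) = 1}"
      by cases (use big_row_spec unit_col_iff[of i j] assms in \<open>auto simp: unit_rows_def\<close>)
  qed
  moreover have "card (big_row ` ?T) = card ?T"
    using inj_on_big_row by (intro card_image) (auto intro: inj_on_subset)
  moreover have "card (big_row ` ?T \<union> ?U) = card (big_row ` ?T) + card ?U"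
    by (rule card_Un_disjoint) (auto simp: unit_rows_def)
  ultimately show ?thesis
    unfolding col_sum_eq_card by simp
qed

lemma bij_betw_unit_col: "bij_betw unit_col unit_rows outer_cols"
proof (rule bij_betw_if_covers_card_le)
  show "finite unit_rows"
    by (simp add: unit_rows_def)
  show "card unit_rows \<le> card outer_cols"
    by (simp add: card_unit_rows card_outer_cols)
  show "outer_cols \<subseteq> unit_col ` unit_rows"
  proof
    fix j assume j: "j \<in> outer_cols"
    \<comment> \<open>Column j has k + 1 ones, at most k of them in big rows.\<close>
    have "{t. t < k \<and> A $$ (big_row t, j) = 1} \<subseteq> {..<k}"
      by auto
    from card_mono[OF finite_lessThan this]
    have "card {t. t < k \<and> A $$ (big_row t, j) = 1} \<le> k"
      by simp
    then have "card {i \<in> unit_rows. unit_col i = j} \<noteq> 0"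
      using col_sum_split[of j] col_sum_outer_col[OF j] j by (simp add: outer_cols_def)
    then show "j \<in> unit_col ` unit_rows"
      by (auto simp: card_eq_0_iff)
  qed
qed

lemma big_row_outer_col:
  assumes "t < k" and j: "j \<in> outer_cols"
  shows "A $$ (big_row t, j) = 1"
proof -
  have "j \<in> unit_col ` unit_rows"
    using bij_betw_unit_col j by (simp add: bij_betw_def)
  then obtain i where "i \<in> unit_rows" "unit_col i = j"
    by blast
  then have "{i \<in> unit_rows. unit_col i = j} = {i}"
    using bij_betw_unit_col by (auto simp: bij_betw_def inj_on_def)
  then have "card {t. t < k \<and> A $$ (big_row t, j) = 1} = card {..<k}"
    using col_sum_split[of j] col_sum_outer_col[OF j] j by (simp add: outer_cols_def)
  then have "{t. t < k \<and> A $$ (big_row t, j) = 1} = {..<k}"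
    by (intro card_subset_eq) auto
  then show ?thesis
    using assms(1) by blast
qed

lemma staircase_block:
  assumes "t < k" and "s < k"
  shows "A $$ (big_row t, cols ! s) = 1 \<longleftrightarrow> s + t < k"
proof -
  have "A $$ (big_row t, big_col s) = 1 \<longleftrightarrow> s + t < k"
  proof (rule staircase_iff[where B = "\<lambda>t s. A $$ (big_row t, big_col s) = 1", OF _ _ assms])
    fix t assume "t < k"
    let ?S = "{s. s < k \<and> A $$ (big_row t, big_col s) = 1}"
    have "{j. j < n \<and> A $$ (big_row t, j) = 1} = outer_cols \<union> big_col ` ?S"
      using big_row_outer_col[OF \<open>t < k\<close>] big_col_spec
      by (auto simp: outer_cols_def set_cols)
    moreover have "card (big_col ` ?S) = card ?S"
      using inj_on_big_col by (intro card_image) (auto intro: inj_on_subset)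
    then have "card (outer_cols \<union> big_col ` ?S) = (n - k) + card ?S"
      using card_outer_cols by (subst card_Un_disjoint) (auto simp: outer_cols_def set_cols)
    ultimately have "(n - k) + card ?S = n - t"
      using big_row_spec[OF \<open>t < k\<close>] row_sum_eq_card by simp
    then show "card ?S = k - t"
      using \<open>t < k\<close> k_le_n by linarith
  next
    fix s assume "s < k"
    have "{i \<in> unit_rows. unit_col i = big_col s} = {}"
      using bij_betw_unit_col \<open>s < k\<close> by (auto simp: bij_betw_def outer_cols_def set_cols)
    then have "card {i \<in> unit_rows. unit_col i = big_col s} = 0"
      by (simp only: card.empty)
    then show "card {t. t < k \<and> A $$ (big_row t, big_col s) = 1} = k - s"
      using col_sum_split[of "big_col s"] big_col_spec[OF \<open>s < k\<close>] by simp
  qed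
  then show ?thesis
    using assms by (simp add: nth_cols)
qed

definition sigma :: "nat \<Rightarrow> nat" where
  "sigma i = (if i \<in> big_row ` {..<k} then big_col (the_inv_into {..<k} big_row i)
              else if i < n then unit_col i else i)"

lemma sigma_big_row: "t < k \<Longrightarrow> sigma (big_row t) = cols ! t"
  by (simp add: sigma_def the_inv_into_f_f[OF inj_on_big_row] nth_cols)

lemma sigma_unit_row: "i \<in> unit_rows \<Longrightarrow> sigma i = unit_col i"
  by (auto simp: sigma_def unit_rows_def)

lemma sigma_permutes: "sigma permutes {..<n}"
proof (rule bij_imp_permutes)
  have "bij_betw (big_col \<circ> the_inv_into {..<k} big_row) (big_row ` {..<k}) (set cols)"
    using bij_betw_the_inv_into[OF inj_on_imp_bij_betw[OF inj_on_big_row]]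
      inj_on_imp_bij_betw[OF inj_on_big_col]
    unfolding set_cols by (rule bij_betw_trans)
  then have "bij_betw sigma (big_row ` {..<k}) (set cols)"
    by (rule bij_betw_cong[THEN iffD1, rotated]) (simp add: sigma_def)
  moreover have "bij_betw sigma unit_rows outer_cols"
    using bij_betw_unit_col by (rule bij_betw_cong[THEN iffD1, rotated]) (simp add: sigma_unit_row)
  ultimately have "bij_betw sigma (big_row ` {..<k} \<union> unit_rows) (set cols \<union> outer_cols)"
    by (rule bij_betw_combine) (auto simp: outer_cols_def)
  moreover have "big_row ` {..<k} \<union> unit_rows = {..<n}"
    using big_row_spec by (auto simp: unit_rows_def)
  moreover have "set cols \<union> outer_cols = {..<n}"
    using cols_arrangement by (auto simp: outer_cols_def arrangements_def)
  ultimately show "bij_betw sigma {..<n} {..<n}"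
    by simp
  show "sigma x = x" if "x \<notin> {..<n}" for x
    using that big_row_spec by (auto simp: sigma_def)
qed

lemma entry_eq_1_iff_stair_rel:
  assumes ij: "i < n" "j < n"
  shows "A $$ (i, j) = 1 \<longleftrightarrow> stair_rel cols (sigma i) j"
proof -
  interpret cols: arrangement n k cols
    by (rule arrangement.intro[OF cols_arrangement])
  show ?thesis
  proof (cases "i \<in> unit_rows")
    case True
    have "unit_col i \<notin> set cols"
      using bij_betw_unit_col True by (auto simp: bij_betw_def outer_cols_def)
    then show ?thesis
      using unit_col_iff[OF True, of j] ij cols.stair_rel_outside sigma_unit_row[OF True] by simp
  next
    case False
    then obtain t where t: "t < k" "i = big_row t"
      using ij by (auto simp: unit_rows_def)
    show ?thesis
    proof (cases "j \<in> set cols")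
      case True
      then obtain s where s: "s < k" "j = cols ! s"
        by (auto simp: in_set_conv_nth)
      have "(\<exists>a. a + t < k \<and> cols ! a = cols ! s) \<longleftrightarrow> s + t < k"
        using s(1) cols.nth_c_eq_iff[OF _ s(1)] by (auto dest: add_lessD1)
      then show ?thesis
        using staircase_block[OF t(1) s(1)] cols.stair_rel_nth[OF t(1)] sigma_big_row[OF t(1)] t(2) s(2)
          True by simp
    next
      case False
      then show ?thesis
        using big_row_outer_col[OF t(1)] ij cols.stair_rel_nth[OF t(1)] sigma_big_row[OF t(1)] t(2)
        by (simp add: outer_cols_def)
    qed
  qed
qed

lemma A_eq_stair_mat: "A = stair_mat n sigma cols"
proof (rule eq_matI)
  fix i j
  assume "i < dim_row (stair_mat n sigma cols)" and "j < dim_col (stair_mat n sigma cols)"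
  then have ij: "i < n" "j < n"
    by simp_all
  then show "A $$ (i, j) = stair_mat n sigma cols $$ (i, j)"
    using entry_eq_1_iff_stair_rel[OF ij] by (cases "A $$ (i, j)") (simp_all add: index_stair_mat)
qed (use A_carrier in auto)

end

lemma bij_betw_stair_mat:
  assumes "k \<le> n"
  shows "bij_betw (\<lambda>(s, c). stair_mat n s c) (Sym n \<times> arrangements {..<n} k) (H n k)"
proof -
  have "inj_on (\<lambda>(s, c). stair_mat n s c) (Sym n \<times> arrangements {..<n} k)"
    by (intro inj_onI) (auto simp: Sym_def dest: stair_mat_inj)
  moreover have "(\<lambda>(s, c). stair_mat n s c) ` (Sym n \<times> arrangements {..<n} k) = H n k"
  proof
    show "(\<lambda>(s, c). stair_mat n s c) ` (Sym n \<times> arrangements {..<n} k) \<subseteq> H n k"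
      by (auto simp: Sym_def arrangement_def intro: arrangement.stair_mat_in_H)
    show "H n k \<subseteq> (\<lambda>(s, c). stair_mat n s c) ` (Sym n \<times> arrangements {..<n} k)"
    proof
      fix A assume "A \<in> H n k"
      then interpret H_matrix n k A
        using assms by unfold_locales
      show "A \<in> (\<lambda>(s, c). stair_mat n s c) ` (Sym n \<times> arrangements {..<n} k)"
        using A_eq_stair_mat sigma_permutes cols_arrangement
        by (auto simp: Sym_def intro!: image_eqI[where x = "(sigma, cols)"])
    qed
  qed
  ultimately show ?thesis
    by (simp add: bij_betw_def)
qed

section \<open>Fixed points of the conjugation action\<close>

lemma card_fixed_points_bij_betw:
  assumes f: "bij_betw f X Y" and g: "\<And>x. x \<in> X \<Longrightarrow> g x \<in> X"
    and equivariant: "\<And>x. x \<in> X \<Longrightarrow> h (f x) = f (g x)"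
  shows "card {y \<in> Y. h y = y} = card {x \<in> X. g x = x}"
proof -
  have "h (f x) = f x \<longleftrightarrow> g x = x" if "x \<in> X" for x
    using that g equivariant bij_betw_imp_inj_on[OF f] by (metis inj_on_eq_iff)
  then have "{y \<in> Y. h y = y} = f ` {x \<in> X. g x = x}"
    using bij_betw_imp_surj_on[OF f] by auto
  then show ?thesis
    using bij_betw_imp_inj_on[OF f] by (simp add: card_image inj_on_subset)
qed

lemma conj_eq_iff_commute:
  assumes "p permutes S"
  shows "p \<circ> s \<circ> inv_into UNIV p = s \<longleftrightarrow> s \<circ> p = p \<circ> s"
proof
  assume conj: "p \<circ> s \<circ> inv_into UNIV p = s"
  have "s \<circ> p = p \<circ> s \<circ> (inv_into UNIV p \<circ> p)"
    by (subst conj[symmetric]) (simp add: comp_assoc)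
  then show "s \<circ> p = p \<circ> s"
    using permutes_inv_o(2)[OF assms] by simp
next
  assume commute: "s \<circ> p = p \<circ> s"
  have "p \<circ> s \<circ> inv_into UNIV p = s \<circ> (p \<circ> inv_into UNIV p)"
    unfolding commute[symmetric] by (simp add: comp_assoc)
  then show "p \<circ> s \<circ> inv_into UNIV p = s"
    using permutes_inv_o(1)[OF assms] by simp
qed

lemma map_eq_self_iff: "map f xs = xs \<longleftrightarrow> (\<forall>x\<in>set xs. f x = x)"
  using map_eq_conv[of f xs "\<lambda>x. x"] by simp

lemma card_fixed_points_conj_act:
  assumes "k \<le> n" and "p \<in> Sym n"
  shows "card {A \<in> H n k. conj_act n p A = A}
       = card (centralizer n p) * card (arrangements {i. i < n \<and> p i = i} k)"
proof -
  have p: "p permutes {..<n}"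
    using assms(2) by (simp add: Sym_def)
  let ?g = "\<lambda>(s, c). (p \<circ> s \<circ> inv_into UNIV p, map p c)"
  have "card {A \<in> H n k. conj_act n p A = A} = card {x \<in> Sym n \<times> arrangements {..<n} k. ?g x = x}"
    by (rule card_fixed_points_bij_betw[OF bij_betw_stair_mat[OF assms(1)]])
      (auto simp: Sym_def conj_act_stair_mat[OF p] p permutes_compose permutes_inv map_in_arrangements)
  also have "{x \<in> Sym n \<times> arrangements {..<n} k. ?g x = x}
      = centralizer n p \<times> arrangements {i. i < n \<and> p i = i} k"
    by (auto simp: centralizer_def conj_eq_iff_commute[OF p] map_eq_self_iff arrangements_def)
  finally show ?thesis
    by (simp add: card_cartesian_product)
qed

lemma chi_conj_eq_card_centralizer:
  assumes "p \<in> Sym n"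
  shows "chi_conj n p = of_nat (card (centralizer n p))"
proof -
  have "p permutes {..<n}" and "finite (Sym n)"
    using assms unfolding Sym_def by (simp_all add: finite_permutations)
  then show ?thesis
    by (simp add: chi_conj_def centralizer_def sum_if_eq_card conj_eq_iff_commute)
qed

lemma card_fixed_points_permutes:
  assumes "p permutes {..<n}"
  shows "card {i. i < n \<and> p i = i} = n - card (supp p)"
proof -
  have "supp p \<subseteq> {..<n}"
    using permutes_not_in[OF assms] by (auto simp: supp_def)
  moreover have "{i. i < n \<and> p i = i} = {..<n} - supp p"
    by (auto simp: supp_def)
  ultimately show ?thesis
    by (simp add: card_Diff_subset finite_subset)
qed

theorem mainTheorem5:
  fixes n k :: nat and p :: "nat \<Rightarrow> nat"
  assumes "k \<le> n" and "p \<in> Sym n"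
  shows "chi_beta n k p = of_nat (card (centralizer n p) * falling (n - card (supp p)) k)
       \<and> chi_beta n k p = of_nat (falling (n - card (supp p)) k) * chi_conj n p"
proof -
  have p: "p permutes {..<n}"
    using assms(2) by (simp add: Sym_def)
  have "finite (Sym n \<times> arrangements {..<n} k)"
    unfolding Sym_def by (intro finite_cartesian_product finite_permutations finite_arrangements) simp_all
  then have "finite (H n k)"
    using bij_betw_finite[OF bij_betw_stair_mat[OF assms(1)]] by simp
  then have "chi_beta n k p = of_nat (card {A \<in> H n k. conj_act n p A = A})"
    by (simp add: chi_beta_def sum_if_eq_card)
  also have "\<dots> = of_nat (card (centralizer n p) * falling (n - card (supp p)) k)"
    using card_fixed_points_conj_act[OF assms] card_fixed_points_permutes[OF p]
    by (simp add: card_arrangements)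
  finally show ?thesis
    using chi_conj_eq_card_centralizer[OF assms(2)] by simp
qed

end
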